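(* Let $r,s\ge2$ be integers satisfying $r\ge3$ if $s=2$, $r\ge2$ if $s\in\{3,4\}$, and $r\ge s-1$ if $s\ge5$. Let \[ \alpha_0=\frac{1}{r(s-1)},\qquad \beta_0=\frac{rs-r-s}{r(s-1)}. \] Then $(\alpha_0,\beta_0)$ is a local maximiser of $\varphi$ on $K$, and the Hessian of $\varphi$ at $(\alpha_0,\beta_0)$ is strictly negative definite.
   Context: Let $g(x)=x\log x$ for $x>0$, with $g(0)=0$. Let \[ K=\{(\alpha,\beta)\in\mathbb R^2:\alpha,\beta\ge0,\ (s-1)\alpha+\beta\le1\}. \] Define $\varphi:K\to\mathbb R$ by \begin{align*} \varphi(\alpha,\beta)&=(\alpha+\beta)\log(r-1)+g(\alpha+\beta)+g(r-1-\alpha-\beta)-\tfrac{2}{s-1}g(\beta)-g(\alpha)\\ &\quad-\tfrac{1}{s(s-1)}g(rs-r-s-s\beta)-\tfrac{1}{s-1}g(1-(s-1)\alpha-\beta). \end{align*} *)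

theory Defs
  imports "HOL-Analysis.Analysis"
begin

text \<open>g(x) = x log x for x > 0, g(0) = 0 (values at x < 0 are never used on K).\<close>
definition g :: "real \<Rightarrow> real" where
  "g x = (if x = 0 then 0 else x * ln x)"

definition K :: "nat \<Rightarrow> (real \<times> real) set" where
  "K s = {(a, b). a \<ge> 0 \<and> b \<ge> 0 \<and> (real s - 1) * a + b \<le> 1}"

definition phi :: "nat \<Rightarrow> nat \<Rightarrow> real \<Rightarrow> real \<Rightarrow> real" where
  "phi r s a b =
     (a + b) * ln (real r - 1) + g (a + b) + g (real r - 1 - a - b)
     - 2 / (real s - 1) * g b - g a
     - 1 / (real s * (real s - 1)) * g (real r * real s - real r - real s - real s * b)
     - 1 / (real s - 1) * g (1 - (real s - 1) * a - b)"

definition phi_aa :: "nat \<Rightarrow> nat \<Rightarrow> real \<Rightarrow> real \<Rightarrow> real" where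
  "phi_aa r s a b = deriv (\<lambda>x. deriv (\<lambda>y. phi r s y b) x) a"

definition phi_ab :: "nat \<Rightarrow> nat \<Rightarrow> real \<Rightarrow> real \<Rightarrow> real" where
  "phi_ab r s a b = deriv (\<lambda>y. deriv (\<lambda>x. phi r s x y) a) b"

definition phi_ba :: "nat \<Rightarrow> nat \<Rightarrow> real \<Rightarrow> real \<Rightarrow> real" where
  "phi_ba r s a b = deriv (\<lambda>x. deriv (\<lambda>y. phi r s x y) b) a"

definition phi_bb :: "nat \<Rightarrow> nat \<Rightarrow> real \<Rightarrow> real \<Rightarrow> real" where
  "phi_bb r s a b = deriv (\<lambda>y. deriv (\<lambda>z. phi r s a z) y) b"

definition hessian_neg_def :: "nat \<Rightarrow> nat \<Rightarrow> real \<Rightarrow> real \<Rightarrow> bool" where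
  "hessian_neg_def r s a b \<longleftrightarrow>
     (\<forall>u v. (u, v) \<noteq> (0, 0) \<longrightarrow>
        u * u * phi_aa r s a b + u * v * phi_ab r s a b
        + v * u * phi_ba r s a b + v * v * phi_bb r s a b < 0)"

definition local_max_on :: "(real \<times> real \<Rightarrow> real) \<Rightarrow> (real \<times> real) set \<Rightarrow> real \<times> real \<Rightarrow> bool" where
  "local_max_on f S p \<longleftrightarrow> p \<in> S \<and>
     (\<exists>e>0. \<forall>q\<in>S. dist q p < e \<longrightarrow> f q \<le> f p)"

end

theory Submission
  imports Defs
begin

text \<open>The point \<open>(\<alpha>0, \<beta>0)\<close> lies in the interior of \<open>K\<close> and is a critical point of \<open>\<phi>\<close>.
  Since \<open>\<phi>\<close> is a sum of convex terms \<open>g(a + b) + g(r - 1 - a - b)\<close> minus a nonnegative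
  combination of \<open>g\<close> at four further affine functions, its Hessian form is \<open>P (u + v)\<^sup>2 - Q(u, v)\<close>
  with \<open>P\<close> and \<open>Q\<close> the curvatures of the two groups. At \<open>(\<alpha>0, \<beta>0)\<close> the form \<open>Q - P (u + v)\<^sup>2\<close>
  is positive definite: its determinant is a positive multiple of a cubic in \<open>r\<close>, which the
  restrictions on \<open>r\<close> and \<open>s\<close> make positive.

  For the local maximum no two-variable Taylor theorem is needed: by Taylor's theorem for
  \<open>x log x\<close>, each remainder \<open>g(y\<^sub>0 + h) - g(y\<^sub>0) - g'(y\<^sub>0) h\<close> lies between
  \<open>h\<^sup>2 / (2 (1 \<plusminus> \<delta>) y\<^sub>0)\<close> when \<open>|h| \<le> \<delta> y\<^sub>0\<close>. As positive definiteness of \<open>Q - P (u + v)\<^sup>2\<close>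
  survives replacing \<open>P\<close> by \<open>(1 + \<delta>) P\<close> and \<open>Q\<close> by \<open>(1 - \<delta>) Q\<close> for small \<open>\<delta>\<close>, the increment of
  \<open>\<phi>\<close> is nonpositive near the critical point.\<close>

lemma xlnx_taylor:
  fixes y0 h :: real
  assumes "y0 > 0" "y0 + h > 0"
  obtains t where "min y0 (y0 + h) \<le> t" "t \<le> max y0 (y0 + h)" "t > 0"
    "(y0 + h) * ln (y0 + h) = y0 * ln y0 + (ln y0 + 1) * h + h\<^sup>2 / (2 * t)"
proof (cases "h = 0")
  case True
  then show ?thesis using assms by (intro that[of y0]) auto
next
  case False
  define y where "y = y0 + h"
  define diff :: "nat \<Rightarrow> real \<Rightarrow> real" where
    "diff = (\<lambda>m. if m = 0 then (\<lambda>x. x * ln x) else if m = 1 then (\<lambda>x. ln x + 1) else (\<lambda>x. 1 / x))"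
  have "DERIV (diff m) t :> diff (Suc m) t" if "m < 2" "min y y0 \<le> t" "t \<le> max y y0" for m t
  proof -
    have "t > 0" using that assms unfolding y_def by linarith
    with \<open>m < 2\<close> show ?thesis
      unfolding diff_def by (auto simp: less_2_cases_iff intro!: derivative_eq_intros)
  qed
  then obtain t where t: "if y < y0 then y < t \<and> t < y0 else y0 < t \<and> t < y"
    "y * ln y = (\<Sum>m<2. diff m y0 / fact m * (y - y0) ^ m) + diff 2 t / fact 2 * (y - y0)\<^sup>2"
    using Taylor[of 2 diff "\<lambda>x. x * ln x" "min y y0" "max y y0" y0 y] False
    by (auto simp: diff_def y_def)
  show ?thesis
  proof (rule that[of t])
    show "min y0 (y0 + h) \<le> t" "t \<le> max y0 (y0 + h)" "t > 0"
      using t(1) assms by (auto simp: y_def split: if_splits)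
    show "(y0 + h) * ln (y0 + h) = y0 * ln y0 + (ln y0 + 1) * h + h\<^sup>2 / (2 * t)"
      using t(2) by (simp add: y_def diff_def numeral_2_eq_2)
  qed
qed

definition xlnx_rem :: "real \<Rightarrow> real \<Rightarrow> real" where
  "xlnx_rem y0 h = (y0 + h) * ln (y0 + h) - y0 * ln y0 - (ln y0 + 1) * h"

lemma xlnx_rem_bounds:
  fixes y0 h \<delta> :: real
  assumes "y0 > 0" "0 < \<delta>" "\<delta> < 1" "\<bar>h\<bar> \<le> \<delta> * y0"
  shows "h\<^sup>2 / y0 \<le> 2 * (1 + \<delta>) * xlnx_rem y0 h"
    and "2 * (1 - \<delta>) * xlnx_rem y0 h \<le> h\<^sup>2 / y0"
proof -
  have "0 < (1 - \<delta>) * y0" using assms by simp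
  then have "y0 + h > 0" using assms(4) by (simp add: algebra_simps)
  then obtain t where t: "min y0 (y0 + h) \<le> t" "t \<le> max y0 (y0 + h)" "t > 0"
    and "(y0 + h) * ln (y0 + h) = y0 * ln y0 + (ln y0 + 1) * h + h\<^sup>2 / (2 * t)"
    using xlnx_taylor[OF assms(1)] by blast
  then have rem: "xlnx_rem y0 h = h\<^sup>2 / (2 * t)" by (simp add: xlnx_rem_def)
  have lo: "(1 - \<delta>) * y0 \<le> t" and hi: "t \<le> (1 + \<delta>) * y0"
    using t(1,2) assms(4) by (auto simp: algebra_simps min_def max_def split: if_splits)
  have "h\<^sup>2 / y0 = (1 + \<delta>) * h\<^sup>2 / ((1 + \<delta>) * y0)" using assms by simp
  also have "\<dots> \<le> (1 + \<delta>) * h\<^sup>2 / t" using t(3) hi assms by (intro divide_left_mono) auto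
  also have "\<dots> = 2 * (1 + \<delta>) * xlnx_rem y0 h" unfolding rem using t(3) by (simp add: field_simps)
  finally show "h\<^sup>2 / y0 \<le> 2 * (1 + \<delta>) * xlnx_rem y0 h" .
  have "2 * (1 - \<delta>) * xlnx_rem y0 h = (1 - \<delta>) * h\<^sup>2 / t" unfolding rem using t(3) by (simp add: field_simps)
  also have "\<dots> \<le> (1 - \<delta>) * h\<^sup>2 / ((1 - \<delta>) * y0)"
    using \<open>0 < (1 - \<delta>) * y0\<close> lo t(3) assms(3) by (intro divide_left_mono) simp_all
  also have "\<dots> = h\<^sup>2 / y0" using assms by simp
  finally show "2 * (1 - \<delta>) * xlnx_rem y0 h \<le> h\<^sup>2 / y0" .
qed

definition qform :: "real \<Rightarrow> real \<Rightarrow> real \<Rightarrow> real \<Rightarrow> real \<Rightarrow> real" where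
  "qform a b c x y = a * x\<^sup>2 + 2 * b * x * y + c * y\<^sup>2"

lemma qform_pos_def_iff:
  "(\<forall>x y. (x, y) \<noteq> (0, 0) \<longrightarrow> 0 < qform a b c x y) \<longleftrightarrow> 0 < a \<and> b\<^sup>2 < a * c"
proof
  assume pd: "\<forall>x y. (x, y) \<noteq> (0, 0) \<longrightarrow> 0 < qform a b c x y"
  have "0 < a" using pd[rule_format, of 1 0] by (simp add: qform_def)
  moreover have "0 < a * (a * c - b\<^sup>2)"
    using pd[rule_format, of "- b" a] \<open>0 < a\<close>
    by (simp add: qform_def power2_eq_square algebra_simps)
  ultimately show "0 < a \<and> b\<^sup>2 < a * c" by (simp add: zero_less_mult_iff)
next
  assume coeffs: "0 < a \<and> b\<^sup>2 < a * c"
  show "\<forall>x y. (x, y) \<noteq> (0, 0) \<longrightarrow> 0 < qform a b c x y"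
  proof (intro allI impI)
    fix x y :: real assume "(x, y) \<noteq> (0, 0)"
    have "a * qform a b c x y = (a * x + b * y)\<^sup>2 + (a * c - b\<^sup>2) * y\<^sup>2"
      by (simp add: qform_def power2_eq_square algebra_simps)
    moreover have "0 < (a * x + b * y)\<^sup>2 + (a * c - b\<^sup>2) * y\<^sup>2"
    proof (cases "y = 0")
      case True
      with \<open>(x, y) \<noteq> (0, 0)\<close> coeffs show ?thesis by simp
    next
      case False
      with coeffs show ?thesis by (simp add: add_nonneg_pos)
    qed
    ultimately show "0 < qform a b c x y" using coeffs by (metis zero_less_mult_pos)
  qed
qed

lemma qform_diff: "qform a b c x y - qform a' b' c' x y = qform (a - a') (b - b') (c - c') x y"
  by (simp add: qform_def algebra_simps)

lemma qform_scale: "t * qform a b c x y = qform (t * a) (t * b) (t * c) x y"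
  by (simp add: qform_def algebra_simps)

text \<open>Positive definiteness is an open condition on the coefficients.\<close>
lemma qform_less_margin:
  assumes "\<forall>x y. (x, y) \<noteq> (0, 0) \<longrightarrow> qform a b c x y < qform a' b' c' x y"
  obtains \<delta> where "0 < \<delta>" "\<delta> < 1" "\<And>x y. (1 + \<delta>) * qform a b c x y \<le> (1 - \<delta>) * qform a' b' c' x y"
proof -
  define A where "A d = (1 - d) * a' - (1 + d) * a" for d :: real
  define B where "B d = (1 - d) * b' - (1 + d) * b" for d :: real
  define C where "C d = (1 - d) * c' - (1 + d) * c" for d :: real
  have diff: "(1 - d) * qform a' b' c' x y - (1 + d) * qform a b c x y = qform (A d) (B d) (C d) x y"
    for d x y unfolding qform_scale qform_diff A_def B_def C_def ..
  have "\<forall>x y. (x, y) \<noteq> (0, 0) \<longrightarrow> 0 < qform (A 0) (B 0) (C 0) x y"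
    using assms diff[of 0] by (metis diff_gt_0_iff_gt diff_zero add_0_right mult_1)
  then have "0 < A 0 \<and> (B 0)\<^sup>2 < A 0 * C 0"
    by (simp only: qform_pos_def_iff)
  moreover have "((\<lambda>d. A d) \<longlongrightarrow> A 0) (at_right 0)" "((\<lambda>d. A d * C d - (B d)\<^sup>2) \<longlongrightarrow> A 0 * C 0 - (B 0)\<^sup>2) (at_right 0)"
    unfolding A_def B_def C_def by (auto intro!: tendsto_eq_intros)
  moreover have "eventually (\<lambda>d. d < 1) (at_right (0::real))"
    unfolding eventually_at_right_field by (intro exI[of _ 1]) auto
  ultimately have "eventually (\<lambda>d. 0 < A d \<and> 0 < A d * C d - (B d)\<^sup>2 \<and> d < 1) (at_right 0)"
    by (intro eventually_conj order_tendstoD(1)) auto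
  then obtain e where e: "0 < e" "\<And>d. 0 < d \<Longrightarrow> d < e \<Longrightarrow> 0 < A d \<and> 0 < A d * C d - (B d)\<^sup>2 \<and> d < 1"
    unfolding eventually_at_right_field by blast
  define \<delta> where "\<delta> = e / 2"
  have "0 < \<delta>" "0 < A \<delta>" "(B \<delta>)\<^sup>2 < A \<delta> * C \<delta>" "\<delta> < 1"
    using e(1) e(2)[of \<delta>] by (auto simp: \<delta>_def)
  moreover have nonneg: "0 \<le> qform (A \<delta>) (B \<delta>) (C \<delta>) x y" for x y
  proof (cases "(x, y) = (0, 0)")
    case False
    then show ?thesis using qform_pos_def_iff[of "A \<delta>" "B \<delta>" "C \<delta>"] calculation
      by (metis less_imp_le)
  qed (simp add: qform_def)
  moreover have "(1 + \<delta>) * qform a b c x y \<le> (1 - \<delta>) * qform a' b' c' x y" for x y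
    using diff[of \<delta> x y] nonneg[of x y] by linarith
  ultimately show thesis by (intro that)
qed

definition phi_interior :: "nat \<Rightarrow> nat \<Rightarrow> real \<Rightarrow> real \<Rightarrow> bool" where
  "phi_interior r s a b \<longleftrightarrow> 0 < a \<and> 0 < b \<and> 0 < real r - 1 - a - b \<and>
     0 < real r * real s - real r - real s - real s * b \<and> 0 < 1 - (real s - 1) * a - b"

definition dphi_a :: "nat \<Rightarrow> nat \<Rightarrow> real \<Rightarrow> real \<Rightarrow> real" where
  "dphi_a r s a b = ln (real r - 1) + ln (a + b) - ln (real r - 1 - a - b) - ln a
     + ln (1 - (real s - 1) * a - b)"

definition dphi_b :: "nat \<Rightarrow> nat \<Rightarrow> real \<Rightarrow> real \<Rightarrow> real" where
  "dphi_b r s a b = ln (real r - 1) + ln (a + b) - ln (real r - 1 - a - b) - 2 / (real s - 1) * ln b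
     + 1 / (real s - 1) * ln (real r * real s - real r - real s - real s * b)
     + 1 / (real s - 1) * ln (1 - (real s - 1) * a - b)"

text \<open>Second derivatives of the terms of \<open>phi\<close> with a plus sign (\<open>phi_convex_curv\<close>, multiplying
  \<open>(u + v)\<^sup>2\<close>) and of those with a minus sign (the coefficients \<open>phi_concave_*\<close> of a binary form).\<close>
definition phi_convex_curv :: "nat \<Rightarrow> real \<Rightarrow> real \<Rightarrow> real" where
  "phi_convex_curv r a b = 1 / (a + b) + 1 / (real r - 1 - a - b)"

definition phi_concave_aa :: "nat \<Rightarrow> real \<Rightarrow> real \<Rightarrow> real" where
  "phi_concave_aa s a b = 1 / a + (real s - 1) / (1 - (real s - 1) * a - b)"

definition phi_concave_ab :: "nat \<Rightarrow> real \<Rightarrow> real \<Rightarrow> real" where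
  "phi_concave_ab s a b = 1 / (1 - (real s - 1) * a - b)"

definition phi_concave_bb :: "nat \<Rightarrow> nat \<Rightarrow> real \<Rightarrow> real \<Rightarrow> real" where
  "phi_concave_bb r s a b = 2 / ((real s - 1) * b)
     + real s / ((real s - 1) * (real r * real s - real r - real s - real s * b))
     + 1 / ((real s - 1) * (1 - (real s - 1) * a - b))"

lemma g_eq: "g x = x * ln x"
  by (simp add: g_def)

lemma has_real_derivative_g [derivative_intros]:
  assumes "(f has_real_derivative f') (at x)" "0 < f x"
  shows "((\<lambda>x. g (f x)) has_real_derivative (ln (f x) + 1) * f') (at x)"
  using assms unfolding g_eq by (auto intro!: derivative_eq_intros simp: algebra_simps)

lemma phi_deriv_a:
  assumes "s \<noteq> 1" "phi_interior r s a b"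
  shows "((\<lambda>x. phi r s x b) has_real_derivative dphi_a r s a b) (at a)"
proof -
  have "real s - 1 \<noteq> 0" using assms(1) by simp
  with assms(2) show ?thesis unfolding phi_def dphi_a_def phi_interior_def
    by (auto intro!: derivative_eq_intros) (simp_all add: divide_simps algebra_simps)
qed

lemma phi_deriv_b:
  assumes "s \<ge> 2" "phi_interior r s a b"
  shows "((\<lambda>y. phi r s a y) has_real_derivative dphi_b r s a b) (at b)"
proof -
  have "real s - 1 \<noteq> 0" "real s \<noteq> 0" using assms(1) by auto
  with assms(2) show ?thesis unfolding phi_def dphi_b_def phi_interior_def
    by (auto intro!: derivative_eq_intros) (simp_all add: divide_simps)
qed

lemma dphi_a_deriv_a:
  assumes "phi_interior r s a b"
  shows "((\<lambda>x. dphi_a r s x b) has_real_derivative phi_convex_curv r a b - phi_concave_aa s a b) (at a)"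
  using assms unfolding dphi_a_def phi_convex_curv_def phi_concave_aa_def phi_interior_def
  by - ((rule derivative_eq_intros refl | simp)+, (simp_all add: divide_simps)?)

lemma dphi_a_deriv_b:
  assumes "phi_interior r s a b"
  shows "((\<lambda>y. dphi_a r s a y) has_real_derivative phi_convex_curv r a b - phi_concave_ab s a b) (at b)"
  using assms unfolding dphi_a_def phi_convex_curv_def phi_concave_ab_def phi_interior_def
  by - ((rule derivative_eq_intros refl | simp)+, (simp_all add: divide_simps)?)

lemma dphi_b_deriv_a:
  assumes "s \<noteq> 1" "phi_interior r s a b"
  shows "((\<lambda>x. dphi_b r s x b) has_real_derivative phi_convex_curv r a b - phi_concave_ab s a b) (at a)"
  using assms unfolding dphi_b_def phi_convex_curv_def phi_concave_ab_def phi_interior_def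
  by - ((rule derivative_eq_intros refl | simp)+, (simp_all add: divide_simps)?)

lemma dphi_b_deriv_b:
  assumes "phi_interior r s a b"
  shows "((\<lambda>y. dphi_b r s a y) has_real_derivative phi_convex_curv r a b - phi_concave_bb r s a b) (at b)"
  using assms unfolding dphi_b_def phi_convex_curv_def phi_concave_bb_def phi_interior_def
  by - ((rule derivative_eq_intros refl | simp)+, (simp_all add: divide_simps)?)

lemma deriv_of_deriv_eq:
  fixes F :: "real \<Rightarrow> real \<Rightarrow> real"
  assumes "open S" "b \<in> S" "\<And>y. y \<in> S \<Longrightarrow> (F y has_real_derivative D y) (at (p y))"
    and "(D has_real_derivative D') (at b)"
  shows "deriv (\<lambda>y. deriv (F y) (p y)) b = D'"
proof -
  have "((\<lambda>y. deriv (F y) (p y)) has_real_derivative D') (at b)"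
    using assms by (intro has_field_derivative_transform_within_open[OF assms(4)])
      (auto intro: DERIV_imp_deriv[symmetric])
  then show ?thesis by (rule DERIV_imp_deriv)
qed

lemma open_phi_interior_a: "open {x. phi_interior r s x b}"
  unfolding phi_interior_def by (intro open_Collect_conj open_Collect_less continuous_intros)

lemma open_phi_interior_b: "open {y. phi_interior r s a y}"
  unfolding phi_interior_def by (intro open_Collect_conj open_Collect_less continuous_intros)

lemma phi_second_partials:
  assumes "s \<ge> 2" "phi_interior r s a b"
  shows "phi_aa r s a b = phi_convex_curv r a b - phi_concave_aa s a b"
    and "phi_ab r s a b = phi_convex_curv r a b - phi_concave_ab s a b"
    and "phi_ba r s a b = phi_convex_curv r a b - phi_concave_ab s a b"
    and "phi_bb r s a b = phi_convex_curv r a b - phi_concave_bb r s a b"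
proof -
  have "s \<noteq> 1" using assms(1) by auto
  show "phi_aa r s a b = phi_convex_curv r a b - phi_concave_aa s a b"
    unfolding phi_aa_def
    by (rule deriv_of_deriv_eq[where S = "{x. phi_interior r s x b}" and F = "\<lambda>_ x. phi r s x b"
          and D = "\<lambda>x. dphi_a r s x b" and p = "\<lambda>x. x"])
       (simp_all add: open_phi_interior_a assms phi_deriv_a[OF \<open>s \<noteq> 1\<close>] dphi_a_deriv_a[OF assms(2)])
  show "phi_ab r s a b = phi_convex_curv r a b - phi_concave_ab s a b"
    unfolding phi_ab_def
    by (rule deriv_of_deriv_eq[where S = "{y. phi_interior r s a y}" and F = "\<lambda>y x. phi r s x y"
          and D = "\<lambda>y. dphi_a r s a y" and p = "\<lambda>_. a"])
       (simp_all add: open_phi_interior_b assms phi_deriv_a[OF \<open>s \<noteq> 1\<close>] dphi_a_deriv_b[OF assms(2)])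
  show "phi_ba r s a b = phi_convex_curv r a b - phi_concave_ab s a b"
    unfolding phi_ba_def
    by (rule deriv_of_deriv_eq[where S = "{x. phi_interior r s x b}" and F = "\<lambda>x y. phi r s x y"
          and D = "\<lambda>x. dphi_b r s x b" and p = "\<lambda>_. b"])
       (simp_all add: open_phi_interior_a assms phi_deriv_b[OF assms(1)] dphi_b_deriv_a[OF \<open>s \<noteq> 1\<close> assms(2)])
  show "phi_bb r s a b = phi_convex_curv r a b - phi_concave_bb r s a b"
    unfolding phi_bb_def
    by (rule deriv_of_deriv_eq[where S = "{y. phi_interior r s a y}" and F = "\<lambda>_ y. phi r s a y"
          and D = "\<lambda>y. dphi_b r s a y" and p = "\<lambda>y. y"])
       (simp_all add: open_phi_interior_b assms phi_deriv_b[OF assms(1)] dphi_b_deriv_b[OF assms(2)])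
qed

lemma phi_increment:
  assumes "s \<ge> 2"
  shows "phi r s (a + x) (b + y) - phi r s a b = dphi_a r s a b * x + dphi_b r s a b * y
    + xlnx_rem (a + b) (x + y) + xlnx_rem (real r - 1 - a - b) (- (x + y))
    - 2 / (real s - 1) * xlnx_rem b y - xlnx_rem a x
    - 1 / (real s * (real s - 1)) * xlnx_rem (real r * real s - real r - real s - real s * b) (- (real s * y))
    - 1 / (real s - 1) * xlnx_rem (1 - (real s - 1) * a - b) (- ((real s - 1) * x + y))"
proof -
  define k1 where "k1 = 1 / (real s - 1)"
  define k2 where "k2 = 1 / (real s * (real s - 1))"
  have k: "k1 * (real s - 1) = 1" "k2 * real s = k1" using assms by (auto simp: k1_def k2_def)
  have coeffs: "2 / (real s - 1) = 2 * k1" "1 / (real s - 1) = k1" "1 / (real s * (real s - 1)) = k2"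
    by (simp_all add: k1_def k2_def)
  have args: "(a + x) + (b + y) = (a + b) + (x + y)"
    "real r - 1 - (a + x) - (b + y) = (real r - 1 - a - b) + - (x + y)"
    "real r * real s - real r - real s - real s * (b + y)
       = (real r * real s - real r - real s - real s * b) + - (real s * y)"
    "1 - (real s - 1) * (a + x) - (b + y) = (1 - (real s - 1) * a - b) + - ((real s - 1) * x + y)"
    by (simp_all add: algebra_simps)
  show ?thesis
    unfolding phi_def args unfolding g_eq xlnx_rem_def dphi_a_def dphi_b_def coeffs
    using k by algebra
qed

lemma phi_hessian_qform:
  assumes "s \<ge> 2" "phi_interior r s a b"
  shows "u * u * phi_aa r s a b + u * v * phi_ab r s a b + v * u * phi_ba r s a b + v * v * phi_bb r s a b
     = qform (phi_convex_curv r a b) (phi_convex_curv r a b) (phi_convex_curv r a b) u v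
       - qform (phi_concave_aa s a b) (phi_concave_ab s a b) (phi_concave_bb r s a b) u v"
  unfolding phi_second_partials[OF assms] qform_def by (simp add: power2_eq_square algebra_simps)

lemma hessian_neg_def_iff:
  assumes "s \<ge> 2" "phi_interior r s a b"
  shows "hessian_neg_def r s a b \<longleftrightarrow> (\<forall>u v. (u, v) \<noteq> (0, 0) \<longrightarrow>
     qform (phi_convex_curv r a b) (phi_convex_curv r a b) (phi_convex_curv r a b) u v
     < qform (phi_concave_aa s a b) (phi_concave_ab s a b) (phi_concave_bb r s a b) u v)"
  unfolding hessian_neg_def_def phi_hessian_qform[OF assms] by simp

lemma qform_phi_convex_curv:
  "qform (phi_convex_curv r a b) (phi_convex_curv r a b) (phi_convex_curv r a b) x y
     = (x + y)\<^sup>2 / (a + b) + (- (x + y))\<^sup>2 / (real r - 1 - a - b)"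
  unfolding qform_def phi_convex_curv_def by (simp add: power2_eq_square algebra_simps add_divide_distrib)

lemma qform_phi_concave:
  assumes "s \<ge> 2" "phi_interior r s a b"
  shows "qform (phi_concave_aa s a b) (phi_concave_ab s a b) (phi_concave_bb r s a b) x y
     = 2 / (real s - 1) * (y\<^sup>2 / b) + x\<^sup>2 / a
       + 1 / (real s * (real s - 1)) * ((- (real s * y))\<^sup>2 / (real r * real s - real r - real s - real s * b))
       + 1 / (real s - 1) * ((- ((real s - 1) * x + y))\<^sup>2 / (1 - (real s - 1) * a - b))"
proof -
  define d where "d = 1 - (real s - 1) * a - b"
  define e where "e = real r * real s - real r - real s - real s * b"
  have s: "real s - 1 \<noteq> 0" "real s \<noteq> 0" using assms(1) by auto
  have "d \<noteq> 0" using assms(2) by (simp add: phi_interior_def d_def)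
  have t5: "1 / (real s * (real s - 1)) * ((- (real s * y))\<^sup>2 / e) = real s / ((real s - 1) * e) * y\<^sup>2"
    using s by (simp add: power2_eq_square)
  have t6: "1 / (real s - 1) * ((- ((real s - 1) * x + y))\<^sup>2 / d)
      = (real s - 1) / d * x\<^sup>2 + 2 * (1 / d) * x * y + 1 / ((real s - 1) * d) * y\<^sup>2"
    using s \<open>d \<noteq> 0\<close> by (simp add: power2_eq_square field_simps)
  show ?thesis
    unfolding qform_def phi_concave_aa_def phi_concave_ab_def phi_concave_bb_def
      d_def[symmetric] e_def[symmetric] t5 t6
    by (simp add: algebra_simps add_divide_distrib)
qed

lemma phi_convex_rem_le:
  assumes "phi_interior r s a b" "0 < \<delta>" "\<delta> < 1"
    and "\<bar>x + y\<bar> \<le> \<delta> * (a + b)" "\<bar>x + y\<bar> \<le> \<delta> * (real r - 1 - a - b)"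
  shows "2 * (1 - \<delta>) * (xlnx_rem (a + b) (x + y) + xlnx_rem (real r - 1 - a - b) (- (x + y)))
    \<le> qform (phi_convex_curv r a b) (phi_convex_curv r a b) (phi_convex_curv r a b) x y"
proof -
  have "0 < a + b" "0 < real r - 1 - a - b" using assms(1) by (auto simp: phi_interior_def)
  note bound = xlnx_rem_bounds(2)[OF _ assms(2,3)]
  have "2 * (1 - \<delta>) * xlnx_rem (a + b) (x + y) \<le> (x + y)\<^sup>2 / (a + b)"
    by (rule bound[OF \<open>0 < a + b\<close> assms(4)])
  moreover have "2 * (1 - \<delta>) * xlnx_rem (real r - 1 - a - b) (- (x + y))
      \<le> (- (x + y))\<^sup>2 / (real r - 1 - a - b)"
    by (rule bound[OF \<open>0 < real r - 1 - a - b\<close>]) (use assms(5) in simp)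
  ultimately show ?thesis unfolding qform_phi_convex_curv by (simp add: distrib_left)
qed

lemma phi_concave_rem_ge:
  assumes "s \<ge> 2" "phi_interior r s a b" "0 < \<delta>" "\<delta> < 1"
    and "\<bar>x\<bar> \<le> \<delta> * a" "\<bar>y\<bar> \<le> \<delta> * b"
      "\<bar>real s * y\<bar> \<le> \<delta> * (real r * real s - real r - real s - real s * b)"
      "\<bar>(real s - 1) * x + y\<bar> \<le> \<delta> * (1 - (real s - 1) * a - b)"
  shows "qform (phi_concave_aa s a b) (phi_concave_ab s a b) (phi_concave_bb r s a b) x y
    \<le> 2 * (1 + \<delta>) * (2 / (real s - 1) * xlnx_rem b y + xlnx_rem a x
      + 1 / (real s * (real s - 1)) * xlnx_rem (real r * real s - real r - real s - real s * b) (- (real s * y))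
      + 1 / (real s - 1) * xlnx_rem (1 - (real s - 1) * a - b) (- ((real s - 1) * x + y)))"
proof -
  define k1 where "k1 = 1 / (real s - 1)"
  define k2 where "k2 = 1 / (real s * (real s - 1))"
  define Rb where "Rb = xlnx_rem b y"
  define Ra where "Ra = xlnx_rem a x"
  define R5 where "R5 = xlnx_rem (real r * real s - real r - real s - real s * b) (- (real s * y))"
  define R6 where "R6 = xlnx_rem (1 - (real s - 1) * a - b) (- ((real s - 1) * x + y))"
  have "0 \<le> k1" "0 \<le> k2" using assms(1) by (simp_all add: k1_def k2_def)
  have pos: "0 < b" "0 < a" "0 < real r * real s - real r - real s - real s * b"
    "0 < 1 - (real s - 1) * a - b"
    using assms(2) by (auto simp: phi_interior_def)
  note bound = xlnx_rem_bounds(1)[OF _ assms(3,4)]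
  have "y\<^sup>2 / b \<le> 2 * (1 + \<delta>) * Rb"
    unfolding Rb_def by (rule bound[OF pos(1) assms(6)])
  moreover have "x\<^sup>2 / a \<le> 2 * (1 + \<delta>) * Ra"
    unfolding Ra_def by (rule bound[OF pos(2) assms(5)])
  moreover have "(- (real s * y))\<^sup>2 / (real r * real s - real r - real s - real s * b) \<le> 2 * (1 + \<delta>) * R5"
    unfolding R5_def by (rule bound[OF pos(3)]) (use assms(7) in simp)
  moreover have "(- ((real s - 1) * x + y))\<^sup>2 / (1 - (real s - 1) * a - b) \<le> 2 * (1 + \<delta>) * R6"
    unfolding R6_def by (rule bound[OF pos(4)]) (use assms(8) in simp)
  moreover have "2 / (real s - 1) = 2 * k1" by (simp add: k1_def)
  moreover have "2 * (1 + \<delta>) * (2 * k1 * Rb + Ra + k2 * R5 + k1 * R6)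
    = 2 * k1 * (2 * (1 + \<delta>) * Rb) + 2 * (1 + \<delta>) * Ra + k2 * (2 * (1 + \<delta>) * R5) + k1 * (2 * (1 + \<delta>) * R6)"
    by (simp add: algebra_simps)
  ultimately show ?thesis
    unfolding qform_phi_concave[OF assms(1,2)] k1_def[symmetric] k2_def[symmetric]
      Rb_def[symmetric] Ra_def[symmetric] R5_def[symmetric] R6_def[symmetric]
    using \<open>0 \<le> k1\<close> \<open>0 \<le> k2\<close> by (smt (verit) mult_left_mono)
qed

lemma phi_increment_bound:
  assumes "s \<ge> 2" "phi_interior r s a b" "dphi_a r s a b = 0" "dphi_b r s a b = 0"
    and "0 < \<delta>" "\<delta> < 1"
    and "\<bar>x + y\<bar> \<le> \<delta> * (a + b)" "\<bar>x + y\<bar> \<le> \<delta> * (real r - 1 - a - b)"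
      "\<bar>x\<bar> \<le> \<delta> * a" "\<bar>y\<bar> \<le> \<delta> * b"
      "\<bar>real s * y\<bar> \<le> \<delta> * (real r * real s - real r - real s - real s * b)"
      "\<bar>(real s - 1) * x + y\<bar> \<le> \<delta> * (1 - (real s - 1) * a - b)"
  shows "2 * ((1 - \<delta>) * (1 + \<delta>)) * (phi r s (a + x) (b + y) - phi r s a b)
    \<le> (1 + \<delta>) * qform (phi_convex_curv r a b) (phi_convex_curv r a b) (phi_convex_curv r a b) x y
      - (1 - \<delta>) * qform (phi_concave_aa s a b) (phi_concave_ab s a b) (phi_concave_bb r s a b) x y"
proof -
  define U where "U = xlnx_rem (a + b) (x + y) + xlnx_rem (real r - 1 - a - b) (- (x + y))"
  define V where "V = 2 / (real s - 1) * xlnx_rem b y + xlnx_rem a x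
      + 1 / (real s * (real s - 1)) * xlnx_rem (real r * real s - real r - real s - real s * b) (- (real s * y))
      + 1 / (real s - 1) * xlnx_rem (1 - (real s - 1) * a - b) (- ((real s - 1) * x + y))"
  have "2 * ((1 - \<delta>) * (1 + \<delta>)) * (phi r s (a + x) (b + y) - phi r s a b)
    = (1 + \<delta>) * (2 * (1 - \<delta>) * U) - (1 - \<delta>) * (2 * (1 + \<delta>) * V)"
    unfolding phi_increment[OF assms(1)] assms(3,4) U_def V_def by (simp add: algebra_simps)
  moreover have "(1 + \<delta>) * (2 * (1 - \<delta>) * U)
      \<le> (1 + \<delta>) * qform (phi_convex_curv r a b) (phi_convex_curv r a b) (phi_convex_curv r a b) x y"
    unfolding U_def using phi_convex_rem_le[OF assms(2,5,6,7,8)] assms(5) by (intro mult_left_mono) auto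
  moreover have "(1 - \<delta>) * qform (phi_concave_aa s a b) (phi_concave_ab s a b) (phi_concave_bb r s a b) x y
      \<le> (1 - \<delta>) * (2 * (1 + \<delta>) * V)"
    unfolding V_def using phi_concave_rem_ge[OF assms(1,2,5,6,9-12)] assms(6) by (intro mult_left_mono) auto
  ultimately show ?thesis by linarith
qed

lemma phi_le_near_critical_point:
  assumes "s \<ge> 2" "phi_interior r s a b" "dphi_a r s a b = 0" "dphi_b r s a b = 0"
    and "hessian_neg_def r s a b"
  obtains \<epsilon> where "0 < \<epsilon>"
    "\<And>x y. \<bar>x\<bar> < \<epsilon> \<Longrightarrow> \<bar>y\<bar> < \<epsilon> \<Longrightarrow> phi r s (a + x) (b + y) \<le> phi r s a b"
proof -
  obtain \<delta> where \<delta>: "0 < \<delta>" "\<delta> < 1" and margin: "\<And>x y.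
      (1 + \<delta>) * qform (phi_convex_curv r a b) (phi_convex_curv r a b) (phi_convex_curv r a b) x y
      \<le> (1 - \<delta>) * qform (phi_concave_aa s a b) (phi_concave_ab s a b) (phi_concave_bb r s a b) x y"
    using qform_less_margin assms(5) unfolding hessian_neg_def_iff[OF assms(1,2)] by blast
  define \<mu> where "\<mu> = Min {a + b, real r - 1 - a - b, b, a,
    real r * real s - real r - real s - real s * b, 1 - (real s - 1) * a - b}"
  have "0 < \<mu>" using assms(2) by (simp add: \<mu>_def phi_interior_def)
  define \<epsilon> where "\<epsilon> = \<delta> * \<mu> / real s"
  have "0 < \<epsilon>" using \<delta> \<open>0 < \<mu>\<close> assms(1) by (simp add: \<epsilon>_def)
  have within: "\<bar>h\<bar> \<le> \<delta> * A" if "\<bar>h\<bar> \<le> real s * \<epsilon>" "A \<in> {a + b, real r - 1 - a - b, b, a,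
    real r * real s - real r - real s - real s * b, 1 - (real s - 1) * a - b}" for h A
  proof -
    have "\<mu> \<le> A" unfolding \<mu>_def using that(2) by (intro Min_le) auto
    then have "\<delta> * \<mu> \<le> \<delta> * A" using \<delta> by (intro mult_left_mono) auto
    moreover have "real s * \<epsilon> = \<delta> * \<mu>" using assms(1) by (simp add: \<epsilon>_def)
    ultimately show ?thesis using that(1) by linarith
  qed
  have "phi r s (a + x) (b + y) \<le> phi r s a b" if "\<bar>x\<bar> < \<epsilon>" "\<bar>y\<bar> < \<epsilon>" for x y
  proof -
    have "2 * \<epsilon> \<le> real s * \<epsilon>" using \<open>0 < \<epsilon>\<close> assms(1) by simp
    moreover have "(real s - 1) * \<bar>x\<bar> \<le> (real s - 1) * \<epsilon>" "real s * \<bar>y\<bar> \<le> real s * \<epsilon>"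
      using that assms(1) by (simp_all add: mult_left_mono)
    moreover have "\<bar>(real s - 1) * x + y\<bar> \<le> (real s - 1) * \<bar>x\<bar> + \<bar>y\<bar>" "\<bar>real s * y\<bar> = real s * \<bar>y\<bar>"
      using abs_triangle_ineq[of "(real s - 1) * x" y] assms(1) by (simp_all add: abs_mult)
    ultimately have "\<bar>x + y\<bar> \<le> real s * \<epsilon>" "\<bar>x\<bar> \<le> real s * \<epsilon>" "\<bar>y\<bar> \<le> real s * \<epsilon>"
      "\<bar>real s * y\<bar> \<le> real s * \<epsilon>" "\<bar>(real s - 1) * x + y\<bar> \<le> real s * \<epsilon>"
      using that abs_triangle_ineq[of x y] \<open>0 < \<epsilon>\<close> left_diff_distrib[of "real s" 1 \<epsilon>] by linarith+
    then have "2 * ((1 - \<delta>) * (1 + \<delta>)) * (phi r s (a + x) (b + y) - phi r s a b)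
      \<le> (1 + \<delta>) * qform (phi_convex_curv r a b) (phi_convex_curv r a b) (phi_convex_curv r a b) x y
        - (1 - \<delta>) * qform (phi_concave_aa s a b) (phi_concave_ab s a b) (phi_concave_bb r s a b) x y"
      by (intro phi_increment_bound assms(1-4) \<delta> within) auto
    also have "\<dots> \<le> 0" using margin[of x y] by simp
    finally show ?thesis using \<delta> by (simp add: mult_le_0_iff)
  qed
  with \<open>0 < \<epsilon>\<close> show thesis by (rule that)
qed

lemma phi_local_max_at_critical_point:
  assumes "s \<ge> 2" "phi_interior r s a b" "dphi_a r s a b = 0" "dphi_b r s a b = 0"
    and "hessian_neg_def r s a b" "(a, b) \<in> S"
  shows "local_max_on (\<lambda>(a, b). phi r s a b) S (a, b)"
proof -
  obtain \<epsilon> where "0 < \<epsilon>"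
    and near: "\<And>x y. \<bar>x\<bar> < \<epsilon> \<Longrightarrow> \<bar>y\<bar> < \<epsilon> \<Longrightarrow> phi r s (a + x) (b + y) \<le> phi r s a b"
    using phi_le_near_critical_point[OF assms(1-5)] by blast
  have "phi r s (fst q) (snd q) \<le> phi r s a b" if "dist q (a, b) < \<epsilon>" for q
    using near[of "fst q - a" "snd q - b"] dist_fst_le[of q "(a, b)"] dist_snd_le[of q "(a, b)"] that
    by (simp add: dist_real_def)
  with \<open>0 < \<epsilon>\<close> assms(6) show ?thesis unfolding local_max_on_def by (auto simp: case_prod_beta)
qed

text \<open>At the critical point, the determinant of the negated Hessian equals
  \<open>R\<^sup>3 (S - 1)\<^sup>2 hessian_det_factor R S / ((R S - R - S)\<^sup>2 (R - 1)\<^sup>2)\<close>.\<close>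
definition hessian_det_factor :: "real \<Rightarrow> real \<Rightarrow> real" where
  "hessian_det_factor R S = (S - 1) * R ^ 3 - (S\<^sup>2 - S + 1) * R\<^sup>2 + (S - 1) * (2 * S - 1) * R - S * (S - 1)"

lemma admissible_parameters_pos:
  fixes r s :: nat
  assumes "r \<ge> 2" "s \<ge> 2" "s = 2 \<Longrightarrow> r \<ge> 3" "s \<ge> 5 \<Longrightarrow> r \<ge> s - 1"
  shows "0 < real r * real s - real r - real s"
    and "0 < hessian_det_factor (real r) (real s)"
proof -
  define R S where "R = real r" and "S = real s"
  have "2 \<le> R" "2 \<le> S" using assms(1,2) by (simp_all add: R_def S_def)
  show "0 < real r * real s - real r - real s"
  proof (cases "s = 2")
    case True
    then show ?thesis using assms(3) by simp
  next
    case False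
    then have "2 * 2 \<le> (R - 1) * (S - 1) + 2"
      using \<open>2 \<le> R\<close> assms(2) mult_mono[of 1 "R - 1" 2 "S - 1"] by (simp add: S_def)
    then show ?thesis by (simp add: R_def[symmetric] S_def[symmetric] algebra_simps)
  qed
  consider "s + 1 \<le> r" | "r = s" | "r + 1 = s" | "s = 4" "r = 2"
    using assms by linarith
  then have "0 < (S - 1) * R ^ 3 - (S\<^sup>2 - S + 1) * R\<^sup>2 + (S - 1) * (2 * S - 1) * R - S * (S - 1)"
  proof cases
    case 1
    then have "S + 1 \<le> R" by (simp add: R_def S_def)
    have "(S - 1) * (S + 1) \<le> (S - 1) * R"
      using \<open>S + 1 \<le> R\<close> \<open>2 \<le> S\<close> by (intro mult_left_mono) auto
    then have "0 \<le> R\<^sup>2 * ((S - 1) * R - (S\<^sup>2 - S + 1))"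
      using \<open>2 \<le> S\<close> by (intro mult_nonneg_nonneg) (auto simp: algebra_simps power2_eq_square)
    moreover have "(2 * S - 1) * 2 \<le> (2 * S - 1) * R"
      using \<open>2 \<le> R\<close> \<open>2 \<le> S\<close> by (intro mult_left_mono) auto
    then have "0 < (S - 1) * ((2 * S - 1) * R - S)"
      using \<open>2 \<le> S\<close> by (intro mult_pos_pos) auto
    ultimately show ?thesis by (simp add: algebra_simps power2_eq_square power3_eq_cube)
  next
    case 2
    then have "3 \<le> S" using assms(2,3) by (cases "s = 2") (auto simp: S_def)
    then have "0 < S * (2 * S - 1) * (S - 2)" by simp
    then show ?thesis using 2 by (simp add: R_def S_def algebra_simps power2_eq_square power3_eq_cube)
  next
    case 3
    then have "3 \<le> S" using assms(1) by (simp add: S_def)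
    then have "0 < (S - 1) * (S * (S - 3) + 1)" by (simp add: add_nonneg_pos)
    moreover have R: "R = S - 1" using 3 by (simp add: R_def S_def flip: of_nat_add)
    ultimately show ?thesis unfolding R by (simp add: algebra_simps power2_eq_square power3_eq_cube)
  next
    case 4
    then show ?thesis by (simp add: R_def S_def)
  qed
  then show "0 < hessian_det_factor (real r) (real s)"
    by (simp add: R_def S_def hessian_det_factor_def)
qed

definition alpha0 :: "nat \<Rightarrow> nat \<Rightarrow> real" where
  "alpha0 r s = 1 / (real r * (real s - 1))"

definition beta0 :: "nat \<Rightarrow> nat \<Rightarrow> real" where
  "beta0 r s = (real r * real s - real r - real s) / (real r * (real s - 1))"

context
  fixes r s :: nat
  assumes s2: "2 \<le> s" and r2: "2 \<le> r" and rs_pos: "0 < real r * real s - real r - real s"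
begin

lemma phi_args_at_crit:
  "alpha0 r s + beta0 r s = (real r - 1) / real r"
  "real r - 1 - alpha0 r s - beta0 r s = (real r - 1)\<^sup>2 / real r"
  "real r * real s - real r - real s - real s * beta0 r s
     = (real r * real s - real r - real s)\<^sup>2 / (real r * (real s - 1))"
  "1 - (real s - 1) * alpha0 r s - beta0 r s = 1 / (real r * (real s - 1))"
proof -
  define m where "m = real r * (real s - 1)"
  define B where "B = real r * real s - real r - real s"
  have "0 < m" "0 < real r" using r2 s2 by (simp_all add: m_def)
  have \<alpha>\<beta>: "alpha0 r s = 1 / m" "beta0 r s = B / m" by (simp_all add: alpha0_def beta0_def m_def B_def)
  show sum: "alpha0 r s + beta0 r s = (real r - 1) / real r"
    unfolding \<alpha>\<beta> using \<open>0 < m\<close> \<open>0 < real r\<close> by (simp add: divide_simps m_def B_def algebra_simps)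
  show "real r - 1 - alpha0 r s - beta0 r s = (real r - 1)\<^sup>2 / real r"
    using sum \<open>0 < real r\<close> by (simp add: diff_diff_eq2 divide_simps power2_eq_square algebra_simps)
  have "m - real s = B" by (simp add: m_def B_def algebra_simps)
  then show "real r * real s - real r - real s - real s * beta0 r s = B\<^sup>2 / m"
    unfolding \<alpha>\<beta> B_def[symmetric] using \<open>0 < m\<close> by (simp add: divide_simps power2_eq_square algebra_simps)
  have "m - (real s - 1) - B = 1" by (simp add: m_def B_def algebra_simps)
  then show "1 - (real s - 1) * alpha0 r s - beta0 r s = 1 / m"
    unfolding \<alpha>\<beta> using \<open>0 < m\<close> by (simp add: divide_simps algebra_simps)
qed

lemma phi_interior_crit: "phi_interior r s (alpha0 r s) (beta0 r s)"
  unfolding phi_interior_def phi_args_at_crit(2-4)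
  using r2 s2 rs_pos by (simp add: alpha0_def beta0_def)

lemma ln_convex_args_at_crit:
  "ln (real r - 1) + ln (alpha0 r s + beta0 r s) - ln (real r - 1 - alpha0 r s - beta0 r s) = 0"
proof -
  have "(real r - 1)\<^sup>2 / real r = (real r - 1) * ((real r - 1) / real r)"
    by (simp add: power2_eq_square)
  also have "ln \<dots> = ln (real r - 1) + ln ((real r - 1) / real r)"
    using r2 by (intro ln_mult_pos) auto
  finally show ?thesis unfolding phi_args_at_crit(1,2) by simp
qed

lemma dphi_a_crit: "dphi_a r s (alpha0 r s) (beta0 r s) = 0"
  using ln_convex_args_at_crit unfolding dphi_a_def phi_args_at_crit(4) by (simp add: alpha0_def)

lemma dphi_b_crit: "dphi_b r s (alpha0 r s) (beta0 r s) = 0"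
proof -
  define m where "m = real r * (real s - 1)"
  define B where "B = real r * real s - real r - real s"
  have "0 < m" "0 < B" using r2 s2 rs_pos by (simp_all add: m_def B_def)
  have "ln (B\<^sup>2 / m) + ln (1 / m) = ln (B\<^sup>2 / m * (1 / m))"
    using \<open>0 < m\<close> \<open>0 < B\<close> by (intro ln_mult_pos[symmetric]) auto
  also have "\<dots> = ln ((B / m)\<^sup>2)" by (simp add: power2_eq_square)
  also have "\<dots> = 2 * ln (beta0 r s)"
    using \<open>0 < m\<close> \<open>0 < B\<close> by (simp add: ln_realpow beta0_def m_def B_def)
  finally have "1 / (real s - 1) * ln (B\<^sup>2 / m) + 1 / (real s - 1) * ln (1 / m)
      = 2 / (real s - 1) * ln (beta0 r s)"
    by (simp flip: add_divide_distrib)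
  then show ?thesis
    using ln_convex_args_at_crit unfolding dphi_b_def phi_args_at_crit(3,4)
    unfolding m_def[symmetric] B_def[symmetric] by linarith
qed

lemma phi_curv_at_crit:
  defines "B \<equiv> real r * real s - real r - real s"
  shows "phi_convex_curv r (alpha0 r s) (beta0 r s) = real r / (real r - 1) + real r / (real r - 1)\<^sup>2"
    and "phi_concave_aa s (alpha0 r s) (beta0 r s) = real s * (real r * (real s - 1))"
    and "phi_concave_ab s (alpha0 r s) (beta0 r s) = real r * (real s - 1)"
    and "phi_concave_bb r s (alpha0 r s) (beta0 r s) = 2 * real r / B + real s * real r / B\<^sup>2 + real r"
proof -
  define m where "m = real r * (real s - 1)"
  have "0 < B" using rs_pos by (simp add: B_def)
  have \<alpha>\<beta>: "alpha0 r s = 1 / m" "beta0 r s = B / m"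
    by (simp_all add: alpha0_def beta0_def m_def B_def)
  note args = phi_args_at_crit[folded m_def B_def]
  have "2 / ((real s - 1) * (B / m)) = 2 * real r / B"
    "real s / ((real s - 1) * (B\<^sup>2 / m)) = real s * real r / B\<^sup>2"
    "1 / ((real s - 1) * (1 / m)) = real r"
    using s2 \<open>0 < B\<close> by (simp_all add: m_def field_simps power2_eq_square)
  then show "phi_convex_curv r (alpha0 r s) (beta0 r s) = real r / (real r - 1) + real r / (real r - 1)\<^sup>2"
    and "phi_concave_aa s (alpha0 r s) (beta0 r s) = real s * m"
    and "phi_concave_ab s (alpha0 r s) (beta0 r s) = m"
    and "phi_concave_bb r s (alpha0 r s) (beta0 r s) = 2 * real r / B + real s * real r / B\<^sup>2 + real r"
    unfolding phi_convex_curv_def phi_concave_aa_def phi_concave_ab_def phi_concave_bb_def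
      B_def[symmetric] args
    by (simp_all add: \<alpha>\<beta> algebra_simps)
qed

lemma hessian_neg_def_crit:
  assumes "0 < hessian_det_factor (real r) (real s)"
  shows "hessian_neg_def r s (alpha0 r s) (beta0 r s)"
proof -
  define R S where "R = real r" and "S = real s"
  define m where "m = R * (S - 1)"
  define B where "B = R * S - R - S"
  define P where "P = R / (R - 1) + R / (R - 1)\<^sup>2"
  define T where "T = 2 * R / B + S * R / B\<^sup>2 + R"
  note curv = phi_curv_at_crit[folded R_def S_def, folded B_def m_def, folded P_def T_def]
  have "2 \<le> R" "2 \<le> S" "0 < B" using r2 s2 rs_pos by (simp_all add: R_def S_def B_def)
  have "R - 1 \<noteq> 0" using \<open>2 \<le> R\<close> by simp
  then have "P * (R - 1)\<^sup>2 = R * (R - 1) + R"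
    unfolding P_def distrib_right by (simp add: power2_eq_square)
  then have hP: "P * (R - 1)\<^sup>2 = R\<^sup>2" by (simp add: algebra_simps power2_eq_square)
  have "R * 1 < (S * (R - 1)) * ((S - 1) * (R - 1))"
    using \<open>0 < B\<close> \<open>2 \<le> R\<close> by (intro mult_strict_mono) (auto simp: B_def algebra_simps)
  then have "R * R < R * ((S * (R - 1)) * ((S - 1) * (R - 1)))" using \<open>2 \<le> R\<close> by simp
  then have "P * (R - 1)\<^sup>2 < S * m * (R - 1)\<^sup>2"
    unfolding hP by (simp add: m_def power2_eq_square algebra_simps)
  then have a_pos: "0 < S * m - P" using \<open>2 \<le> R\<close> by simp
  define w where "w = 1 / B"
  have "w * B = 1" "T = 2 * R * w + S * R * w\<^sup>2 + R"
    using \<open>0 < B\<close> by (simp_all add: w_def T_def power2_eq_square)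
  then have "((S * m - P) * (T - P) - (m - P)\<^sup>2) * (B\<^sup>2 * (R - 1)\<^sup>2)
      = R ^ 3 * (S - 1)\<^sup>2 * hessian_det_factor R S"
    using hP unfolding m_def B_def hessian_det_factor_def by algebra
  moreover have "0 < R ^ 3 * (S - 1)\<^sup>2 * hessian_det_factor R S"
    using assms \<open>2 \<le> R\<close> \<open>2 \<le> S\<close> by (simp add: R_def S_def)
  moreover have "0 < B\<^sup>2 * (R - 1)\<^sup>2" using \<open>0 < B\<close> \<open>2 \<le> R\<close> by simp
  ultimately have "0 < (S * m - P) * (T - P) - (m - P)\<^sup>2" by (metis zero_less_mult_pos2)
  then have "0 < qform (S * m - P) (m - P) (T - P) u v" if "(u, v) \<noteq> (0, 0)" for u v
    using a_pos that qform_pos_def_iff[of "S * m - P" "m - P" "T - P"] by simp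
  then show ?thesis
    unfolding hessian_neg_def_iff[OF s2 phi_interior_crit] curv
    by (simp add: qform_diff[symmetric])
qed

end

theorem lemmaA3:
  fixes r s :: nat
  assumes "r \<ge> 2" and "s \<ge> 2"
    and "s = 2 \<Longrightarrow> r \<ge> 3"
    and "s \<in> {3, 4} \<Longrightarrow> r \<ge> 2"
    and "s \<ge> 5 \<Longrightarrow> r \<ge> s - 1"
  defines "\<alpha>0 \<equiv> 1 / (real r * (real s - 1))"
    and "\<beta>0 \<equiv> (real r * real s - real r - real s) / (real r * (real s - 1))"
  shows "local_max_on (\<lambda>(a, b). phi r s a b) (K s) (\<alpha>0, \<beta>0)
         \<and> hessian_neg_def r s \<alpha>0 \<beta>0"
proof -
  have crit: "\<alpha>0 = alpha0 r s" "\<beta>0 = beta0 r s"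
    by (simp_all add: \<alpha>0_def \<beta>0_def alpha0_def beta0_def)
  \<comment> \<open>the hypothesis for \<open>s \<in> {3, 4}\<close> is implied by \<open>r \<ge> 2\<close>\<close>
  note pos = admissible_parameters_pos[OF assms(1-3,5)]
  note interior = phi_interior_crit[OF assms(2,1) pos(1)]
  have hess: "hessian_neg_def r s (alpha0 r s) (beta0 r s)"
    by (rule hessian_neg_def_crit[OF assms(2,1) pos])
  have "(alpha0 r s, beta0 r s) \<in> K s"
    using interior by (auto simp: K_def phi_interior_def)
  with hess have "local_max_on (\<lambda>(a, b). phi r s a b) (K s) (alpha0 r s, beta0 r s)"
    by (intro phi_local_max_at_critical_point[OF assms(2) interior]
        dphi_a_crit[OF assms(2,1) pos(1)] dphi_b_crit[OF assms(2,1) pos(1)])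
  with hess show ?thesis unfolding crit by simp
qed

end
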